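(* Let $\Lambda$ be a subshift over a finite alphabet $\Sigma$. Then its canonical pair $(\mathfrak L^-_\Lambda,\mathfrak L^+_\Lambda)$ is a $\lambda$-graph bisystem over the common alphabet $\Sigma$ which satisfies FPCC, and the subshift it presents (the unique subshift whose set of nonempty admissible words is $W_{\mathfrak L_\Lambda^+}=W_{\mathfrak L_\Lambda^-}$) is $\Lambda$ itself.
   Context: Subshift: nonempty closed $\Lambda\subset\Sigma^{\mathbb Z}$ with $\sigma(\Lambda)=\Lambda$, $\sigma((x_n))=(x_{n+1})$. Canonical pair: for integers $k<l$ and $x\in\Lambda$, $W_{k,l}(x)$ is the set of words $(\mu_{k+1},\dots,\mu_{l-1})\in\Sigma^{l-k-1}$ such that the sequence equal to $x_n$ for $n\le k$ and $n\ge l$ and to $\mu_n$ for $k<n<l$ lies in $\Lambda$. Write $[x]_{k,l}$ for the class of $x$ under $x\sim z\iff W_{k,l}(x)=W_{k,l}(z)$ and $\Omega^c_{k,l}$ for the (finite) set of classes; $\Omega^c_{-1,0}$ and $\Omega^c_{0,1}$ are singletons. Put $V_l:=\Omega^c_{-1,l}$ ($l\ge0$), and let $\theta_l:\Omega^c_{-l,1}\to\Omega^c_{-1,l}$ be the bijection $[x]_{-l,1}\mapsto[\sigma^{1-l}(x)]_{-1,l}$. $E^+_{l,l+1}$: for $u\in V_l$, $v\in V_{l+1}$, $\alpha\in\Sigma$ there is exactly one edge from $u$ to $v$ labeled $\alpha$ iff some $y\in\Lambda$ has $y_l=\alpha$, $[y]_{-1,l}=u$, $[y]_{-1,l+1}=v$,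 and no edge otherwise. $E^-_{l+1,l}$: for $v\in V_{l+1}$, $u\in V_l$, $\beta\in\Sigma$ there is exactly one edge from $v$ to $u$ labeled $\beta$ iff some $y\in\Lambda$ has $y_{-l}=\beta$, $\theta_{l+1}([y]_{-(l+1),1})=v$, $\theta_l([y]_{-l,1})=u$. $\mathfrak L^\pm_\Lambda=(V,E^\pm,\lambda^\pm)$ with the labels just described. $\lambda$-graph bisystem over $\Sigma^\pm$: vertex set $V=\bigsqcup_{l\ge0}V_l$, $V_l$ finite nonempty; edge sets $E^-=\bigsqcup E^-_{l+1,l}$ (edges from $V_{l+1}$ to $V_l$) and $E^+=\bigsqcup E^+_{l,l+1}$ (edges from $V_l$ to $V_{l+1}$), labelings $\lambda^\pm:E^\pm\to\Sigma^\pm$, with: (1) every $v\in V_l$, $l\ge1$, is terminal of an edge of $E^-_{l+1,l}$, source of an edge of $E^-_{l,l-1}$, source of an edge of $E^+_{l,l+1}$, terminal of an edge of $E^+_{l-1,l}$; each $v\in V_0$ is terminal of an edge of $E^-_{1,0}$ and source of one of $E^+_{0,1}$; (2) $\lambda^-$ right-resolving (same source and label implies same edge), $\lambda^+$ left-resolving (same terminal and label implies same edge); (3) local property: for $u\in V_l,v\in V_{l+2}$ a label-preserving bijection between $\{(e^-,e^+)\in E^-_{l+1,l}\times E^+_{l+1,l+2}:t(e^-)=u,s(e^-)=s(e^+),t(e^+)=v\}$ and $\{(f^+,f^-)\in E^+_{l,l+1}\times E^-_{l+2,l+1}:s(f^+)=u,t(f^+)=t(f^-),s(f^-)=v\}$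 (matching $\lambda^-$ of the $E^-$ components and $\lambda^+$ of the $E^+$ components). For $u\in V_l$: $F(u)$ = words $(\lambda^-(f_l),\dots,\lambda^-(f_1))$ along paths $f_k\in E^-_{k,k-1}$ from $u$ down to $V_0$; $P(u)$ = words $(\lambda^+(e_1),\dots,\lambda^+(e_l))$ along paths $e_k\in E^+_{k-1,k}$ from $V_0$ to $u$. FPCC: $|V_0|=1$, $\Sigma^-=\Sigma^+$, $F(u)=P(u)$ for all $u\in V_l,l\ge1$. $W_{\mathfrak L^+}$ (resp. $W_{\mathfrak L^-}$) is the set of label words of finite paths in $\mathfrak L^+$ (resp. in $\mathfrak L^-$, read in the direction of the edges). *)

theory Defs
  imports Main
begin

definition shift :: "(int \<Rightarrow> 'a) \<Rightarrow> (int \<Rightarrow> 'a)" where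
  "shift x = (\<lambda>n. x (n + 1))"

definition shift_pow :: "int \<Rightarrow> (int \<Rightarrow> 'a) \<Rightarrow> (int \<Rightarrow> 'a)" where
  "shift_pow k x = (\<lambda>n. x (n + k))"

text \<open>Closedness in the product topology of discrete spaces, written out:
  x belongs to the closure iff every central window of x occurs in some element.\<close>
definition shift_closed :: "(int \<Rightarrow> 'a) set \<Rightarrow> bool" where
  "shift_closed L \<longleftrightarrow>
     (\<forall>x. (\<forall>N::nat. \<exists>y\<in>L. \<forall>i. \<bar>i\<bar> \<le> int N \<longrightarrow> y i = x i) \<longrightarrow> x \<in> L)"

definition subshift :: "(int \<Rightarrow> 'a) set \<Rightarrow> bool" where
  "subshift L \<longleftrightarrow> L \<noteq> {} \<and> shift_closed L \<and> shift ` L = L"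

definition admissible_words :: "(int \<Rightarrow> 'a) set \<Rightarrow> 'a list set" where
  "admissible_words L =
     {w. w \<noteq> [] \<and> (\<exists>x\<in>L. \<exists>n. \<forall>i<length w. x (n + int i) = w ! i)}"

definition splice :: "int \<Rightarrow> int \<Rightarrow> (int \<Rightarrow> 'a) \<Rightarrow> 'a list \<Rightarrow> (int \<Rightarrow> 'a)" where
  "splice k l x mu = (\<lambda>n. if k < n \<and> n < l then mu ! nat (n - k - 1) else x n)"

definition Wkl :: "(int \<Rightarrow> 'a) set \<Rightarrow> int \<Rightarrow> int \<Rightarrow> (int \<Rightarrow> 'a) \<Rightarrow> 'a list set" where
  "Wkl L k l x = {mu. length mu = nat (l - k - 1) \<and> splice k l x mu \<in> L}"

definition cls :: "(int \<Rightarrow> 'a) set \<Rightarrow> int \<Rightarrow> int \<Rightarrow> (int \<Rightarrow> 'a) \<Rightarrow> (int \<Rightarrow> 'a) set" where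
  "cls L k l x = {z \<in> L. Wkl L k l z = Wkl L k l x}"

definition Omega :: "(int \<Rightarrow> 'a) set \<Rightarrow> int \<Rightarrow> int \<Rightarrow> (int \<Rightarrow> 'a) set set" where
  "Omega L k l = cls L k l ` L"

text \<open>V_l = Omega^c_{-1,l}.  (Levels are kept apart by the index l, which
  realizes the disjoint union of the V_l.)\<close>
definition canV :: "(int \<Rightarrow> 'a) set \<Rightarrow> nat \<Rightarrow> (int \<Rightarrow> 'a) set set" where
  "canV L l = Omega L (-1) (int l)"

text \<open>theta_l : Omega^c_{-l,1} -> Omega^c_{-1,l}, [x]_{-l,1} |-> [sigma^(1-l) x]_{-1,l},
  evaluated at a representative of the class.\<close>
definition theta :: "(int \<Rightarrow> 'a) set \<Rightarrow> nat \<Rightarrow> (int \<Rightarrow> 'a) set \<Rightarrow> (int \<Rightarrow> 'a) set" where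
  "theta L l C = cls L (-1) (int l) (shift_pow (1 - int l) (SOME x. x \<in> C))"

text \<open>Edges are triples (source, label, terminal); at most one edge per
  (source, label, terminal) as in the definition.  canEp L l = E^+_{l,l+1},
  canEm L l = E^-_{l+1,l}.\<close>
definition canEp :: "(int \<Rightarrow> 'a) set \<Rightarrow> nat \<Rightarrow>
    ((int \<Rightarrow> 'a) set \<times> 'a \<times> (int \<Rightarrow> 'a) set) set" where
  "canEp L l = {(u, \<alpha>, v). u \<in> canV L l \<and> v \<in> canV L (Suc l) \<and>
      (\<exists>y\<in>L. y (int l) = \<alpha> \<and> cls L (-1) (int l) y = u \<and> cls L (-1) (int (Suc l)) y = v)}"

definition canEm :: "(int \<Rightarrow> 'a) set \<Rightarrow> nat \<Rightarrow>
    ((int \<Rightarrow> 'a) set \<times> 'a \<times> (int \<Rightarrow> 'a) set) set" where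
  "canEm L l = {(v, \<beta>, u). v \<in> canV L (Suc l) \<and> u \<in> canV L l \<and>
      (\<exists>y\<in>L. y (- int l) = \<beta> \<and>
         theta L (Suc l) (cls L (- int (Suc l)) 1 y) = v \<and>
         theta L l (cls L (- int l) 1 y) = u)}"

definition esrc :: "'v \<times> 'a \<times> 'v \<Rightarrow> 'v" where "esrc e = fst e"
definition elab :: "'v \<times> 'a \<times> 'v \<Rightarrow> 'a" where "elab e = fst (snd e)"
definition etgt :: "'v \<times> 'a \<times> 'v \<Rightarrow> 'v" where "etgt e = snd (snd e)"

text \<open>Data: alphabets Sm, Sp; vertex levels V l; Em l = E^-_{l+1,l} with source sm,
  terminal tm, label lm; Ep l = E^+_{l,l+1} with source sp, terminal tp, label lp.\<close>

definition lambda_graph_bisystem ::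
  "'am set \<Rightarrow> 'ap set \<Rightarrow> (nat \<Rightarrow> 'v set) \<Rightarrow>
   (nat \<Rightarrow> 'e set) \<Rightarrow> ('e \<Rightarrow> 'v) \<Rightarrow> ('e \<Rightarrow> 'v) \<Rightarrow> ('e \<Rightarrow> 'am) \<Rightarrow>
   (nat \<Rightarrow> 'f set) \<Rightarrow> ('f \<Rightarrow> 'v) \<Rightarrow> ('f \<Rightarrow> 'v) \<Rightarrow> ('f \<Rightarrow> 'ap) \<Rightarrow> bool" where
  "lambda_graph_bisystem Sm Sp V Em sm tm lm Ep sp tp lp \<longleftrightarrow>
     finite Sm \<and> finite Sp \<and>
     (\<forall>l. finite (V l) \<and> V l \<noteq> {}) \<and>
     (\<forall>l. \<forall>e\<in>Em l. sm e \<in> V (Suc l) \<and> tm e \<in> V l \<and> lm e \<in> Sm) \<and>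
     (\<forall>l. \<forall>e\<in>Ep l. sp e \<in> V l \<and> tp e \<in> V (Suc l) \<and> lp e \<in> Sp) \<and>
     (\<forall>l\<ge>1. \<forall>v\<in>V l. (\<exists>e\<in>Em l. tm e = v) \<and> (\<exists>e\<in>Em (l - 1). sm e = v) \<and>
                       (\<exists>e\<in>Ep l. sp e = v) \<and> (\<exists>e\<in>Ep (l - 1). tp e = v)) \<and>
     (\<forall>v\<in>V 0. (\<exists>e\<in>Em 0. tm e = v) \<and> (\<exists>e\<in>Ep 0. sp e = v)) \<and>
     (\<forall>l. \<forall>e\<in>Em l. \<forall>e'\<in>Em l. sm e = sm e' \<and> lm e = lm e' \<longrightarrow> e = e') \<and>
     (\<forall>l. \<forall>e\<in>Ep l. \<forall>e'\<in>Ep l. tp e = tp e' \<and> lp e = lp e' \<longrightarrow> e = e') \<and>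
     (\<forall>l. \<forall>u\<in>V l. \<forall>v\<in>V (l + 2).
        \<exists>\<phi>. bij_betw \<phi>
              {(em, ep). em \<in> Em l \<and> ep \<in> Ep (Suc l) \<and> tm em = u \<and> sm em = sp ep \<and> tp ep = v}
              {(fp, fm). fp \<in> Ep l \<and> fm \<in> Em (Suc l) \<and> sp fp = u \<and> tp fp = tm fm \<and> sm fm = v}
            \<and> (\<forall>p \<in> {(em, ep). em \<in> Em l \<and> ep \<in> Ep (Suc l) \<and> tm em = u \<and> sm em = sp ep \<and> tp ep = v}.
                 lm (fst p) = lm (snd (\<phi> p)) \<and> lp (snd p) = lp (fst (\<phi> p))))"

text \<open>F(u) for u in V l: words (lm f_l, ..., lm f_1), f_k in E^-_{k,k-1} = Em (k-1),
  from u down to V_0.\<close>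
definition Fwords :: "(nat \<Rightarrow> 'e set) \<Rightarrow> ('e \<Rightarrow> 'v) \<Rightarrow> ('e \<Rightarrow> 'v) \<Rightarrow> ('e \<Rightarrow> 'am) \<Rightarrow>
    nat \<Rightarrow> 'v \<Rightarrow> 'am list set" where
  "Fwords Em sm tm lm l u =
     {map (\<lambda>k. lm (f k)) (rev [1..<Suc l]) | f.
        (\<forall>k\<in>{1..l}. f k \<in> Em (k - 1)) \<and> sm (f l) = u \<and>
        (\<forall>k\<in>{2..l}. tm (f k) = sm (f (k - 1)))}"

text \<open>P(u) for u in V l: words (lp e_1, ..., lp e_l), e_k in E^+_{k-1,k} = Ep (k-1),
  from V_0 up to u.\<close>
definition Pwords :: "(nat \<Rightarrow> 'f set) \<Rightarrow> ('f \<Rightarrow> 'v) \<Rightarrow> ('f \<Rightarrow> 'v) \<Rightarrow> ('f \<Rightarrow> 'ap) \<Rightarrow>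
    nat \<Rightarrow> 'v \<Rightarrow> 'ap list set" where
  "Pwords Ep sp tp lp l u =
     {map (\<lambda>k. lp (e k)) [1..<Suc l] | e.
        (\<forall>k\<in>{1..l}. e k \<in> Ep (k - 1)) \<and> tp (e l) = u \<and>
        (\<forall>k\<in>{1..<l}. tp (e k) = sp (e (Suc k)))}"

definition FPCC ::
  "'a set \<Rightarrow> 'a set \<Rightarrow> (nat \<Rightarrow> 'v set) \<Rightarrow>
   (nat \<Rightarrow> 'e set) \<Rightarrow> ('e \<Rightarrow> 'v) \<Rightarrow> ('e \<Rightarrow> 'v) \<Rightarrow> ('e \<Rightarrow> 'a) \<Rightarrow>
   (nat \<Rightarrow> 'f set) \<Rightarrow> ('f \<Rightarrow> 'v) \<Rightarrow> ('f \<Rightarrow> 'v) \<Rightarrow> ('f \<Rightarrow> 'a) \<Rightarrow> bool" where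
  "FPCC Sm Sp V Em sm tm lm Ep sp tp lp \<longleftrightarrow>
     card (V 0) = 1 \<and> Sm = Sp \<and>
     (\<forall>l\<ge>1. \<forall>u\<in>V l. Fwords Em sm tm lm l u = Pwords Ep sp tp lp l u)"

definition Wplus :: "(nat \<Rightarrow> 'f set) \<Rightarrow> ('f \<Rightarrow> 'v) \<Rightarrow> ('f \<Rightarrow> 'v) \<Rightarrow> ('f \<Rightarrow> 'ap) \<Rightarrow> 'ap list set" where
  "Wplus Ep sp tp lp =
     {map (\<lambda>i. lp (e i)) [0..<n] | e n m. n \<ge> 1 \<and>
        (\<forall>i<n. e i \<in> Ep (m + i)) \<and> (\<forall>i. Suc i < n \<longrightarrow> tp (e i) = sp (e (Suc i)))}"

text \<open>Label words of (nonempty) finite paths in L^-, read along the edges (downwards):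
  f_0..f_{n-1}, f_i in Em (m+n-1-i).\<close>
definition Wminus :: "(nat \<Rightarrow> 'e set) \<Rightarrow> ('e \<Rightarrow> 'v) \<Rightarrow> ('e \<Rightarrow> 'v) \<Rightarrow> ('e \<Rightarrow> 'am) \<Rightarrow> 'am list set" where
  "Wminus Em sm tm lm =
     {map (\<lambda>i. lm (f i)) [0..<n] | f n m. n \<ge> 1 \<and>
        (\<forall>i<n. f i \<in> Em (m + n - 1 - i)) \<and> (\<forall>i. Suc i < n \<longrightarrow> tm (f i) = sm (f (Suc i)))}"

definition presented_subshift :: "'a list set \<Rightarrow> (int \<Rightarrow> 'a) set" where
  "presented_subshift W = (THE L. subshift L \<and> admissible_words L = W)"

end

theory Submission
  imports Defs
begin

text \<open>A vertex \<open>u \<in> V_l\<close> is a class \<open>[x]_{-1,l}\<close>, determined by the set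
  \<open>W_{-1,l}(x)\<close> of words that may be written into the coordinates \<open>0..l-1\<close> of \<open>x\<close>.
  Along an edge of \<open>E^+\<close> labelled \<open>a\<close> these words are extended by \<open>a\<close> on the right,
  along an edge of \<open>E^-\<close> labelled \<open>b\<close> by \<open>b\<close> on the left, and conversely every
  such extension is realised by an edge.  Hence the words along paths from \<open>V_0\<close> up to
  \<open>u\<close>, and along paths from \<open>u\<close> down to \<open>V_0\<close>, are exactly the words of \<open>u\<close> (FPCC),
  and the words along arbitrary paths are exactly the admissible words.  A class
  together with the letter in the removed coordinate determines the smaller class,
  which makes the labelling resolving.  For the local property both sides are
  determined by their label pairs, and a label pair occurs on one side iff it occurs
  on the other: transplant the window \<open>0..l\<close> of one configuration into another one
  having the same fillers there.  Finally, a closed shift-invariant set is determined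
  by its admissible words.\<close>

section \<open>Shifts and splicing\<close>

lemma shift_pow_0 [simp]: "shift_pow 0 x = x"
  by (simp add: shift_pow_def)

lemma shift_pow_shift_pow [simp]: "shift_pow a (shift_pow b x) = shift_pow (a + b) x"
  by (simp add: shift_pow_def fun_eq_iff ac_simps)

lemma shift_pow_apply: "shift_pow k x n = x (n + k)"
  by (simp add: shift_pow_def)

lemma shift_eq_shift_pow_1: "shift x = shift_pow 1 x"
  by (simp add: shift_def shift_pow_def)

definition window :: "int \<Rightarrow> int \<Rightarrow> (int \<Rightarrow> 'a) \<Rightarrow> 'a list" where
  "window k l x = map (\<lambda>i. x (k + 1 + int i)) [0..<nat (l - k - 1)]"

lemma length_window [simp]: "length (window k l x) = nat (l - k - 1)"
  by (simp add: window_def)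

lemma splice_inside: "k < n \<Longrightarrow> n < l \<Longrightarrow> splice k l x mu n = mu ! nat (n - k - 1)"
  by (simp add: splice_def)

lemma splice_outside: "n \<le> k \<or> l \<le> n \<Longrightarrow> splice k l x mu n = x n"
  by (auto simp: splice_def)

lemma splice_window: "splice k l x (window k l x) = x"
  by (auto simp: splice_def window_def fun_eq_iff)

lemma splice_window_inside: "k < n \<Longrightarrow> n < l \<Longrightarrow> splice k l y (window k l x) n = x n"
  using splice_window[of k l x] by (metis splice_inside)

lemma splice_cong_outside:
  "(\<And>n. n \<le> k \<or> l \<le> n \<Longrightarrow> x n = x' n) \<Longrightarrow> splice k l x mu = splice k l x' mu"
  by (auto simp: splice_def fun_eq_iff)

lemma splice_shift_pow:
  "splice k l (shift_pow m x) mu = shift_pow m (splice (k + m) (l + m) x mu)"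
  by (auto simp: splice_def fun_eq_iff shift_pow_apply algebra_simps)

lemma splice_Cons:
  assumes "k + 2 \<le> l" "length mu = nat (l - k - 2)"
  shows "splice (k + 1) l x mu = splice k l x (x (k + 1) # mu)"
proof (rule ext)
  fix n
  show "splice (k + 1) l x mu n = splice k l x (x (k + 1) # mu) n"
  proof (cases "k + 1 < n \<and> n < l")
    case True
    then have "nat (n - k - 1) = Suc (nat (n - (k + 1) - 1))" by auto
    with True show ?thesis by (simp add: splice_def)
  next
    case False
    then show ?thesis by (cases "n = k + 1") (auto simp: splice_def)
  qed
qed

lemma splice_snoc:
  assumes "k + 2 \<le> l" "length mu = nat (l - k - 2)"
  shows "splice k (l - 1) x mu = splice k l x (mu @ [x (l - 1)])"
proof (rule ext)
  fix n
  consider "k < n \<and> n < l - 1" | "n = l - 1" | "n \<le> k \<or> l \<le> n" by linarith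
  then show "splice k (l - 1) x mu n = splice k l x (mu @ [x (l - 1)]) n"
  proof cases
    case 1
    then have "nat (n - k - 1) < length mu" using assms by auto
    with 1 show ?thesis by (simp add: splice_def nth_append)
  next
    case 2
    then have "nat (n - k - 1) = length mu" using assms by auto
    with 2 assms show ?thesis by (simp add: splice_def nth_append)
  qed (auto simp: splice_def)
qed

lemma Wkl_cong_outside:
  "(\<And>n. n \<le> k \<or> l \<le> n \<Longrightarrow> x n = x' n) \<Longrightarrow> Wkl L k l x = Wkl L k l x'"
  using splice_cong_outside[of k l x x'] by (simp add: Wkl_def)

lemma Wkl_splice: "Wkl L k l (splice k l x mu) = Wkl L k l x"
  by (rule Wkl_cong_outside) (auto simp: splice_def)

lemma splice_mem: "mu \<in> Wkl L k l x \<Longrightarrow> splice k l x mu \<in> L"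
  by (simp add: Wkl_def)

lemma window_mem_Wkl: "x \<in> L \<Longrightarrow> window k l x \<in> Wkl L k l x"
  by (simp add: Wkl_def splice_window)

lemma glue_by_Wkl:
  assumes "x \<in> L" "Wkl L k l x = Wkl L k l y"
  obtains w where "w \<in> L" "\<And>n. k < n \<Longrightarrow> n < l \<Longrightarrow> w n = x n"
    "\<And>n. n \<le> k \<or> l \<le> n \<Longrightarrow> w n = y n"
proof
  show "splice k l y (window k l x) \<in> L"
    using assms(2) window_mem_Wkl[OF assms(1), of k l] by (intro splice_mem) simp
qed (simp_all add: splice_window_inside splice_outside)

lemma Wkl_shrink_left:
  assumes "k + 2 \<le> l"
  shows "Wkl L (k + 1) l x = {mu. x (k + 1) # mu \<in> Wkl L k l x}"
proof -
  have "length mu = nat (l - (k + 1) - 1) \<longleftrightarrow> length (x (k + 1) # mu) = nat (l - k - 1)" for mu :: "'a list"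
    using assms by auto
  then show ?thesis
    using splice_Cons[OF assms, of _ x] by (auto simp: Wkl_def algebra_simps)
qed

lemma Wkl_shrink_right:
  assumes "k + 2 \<le> l"
  shows "Wkl L k (l - 1) x = {mu. mu @ [x (l - 1)] \<in> Wkl L k l x}"
proof -
  have "length mu = nat (l - 1 - k - 1) \<longleftrightarrow> length (mu @ [x (l - 1)]) = nat (l - k - 1)" for mu :: "'a list"
    using assms by auto
  then show ?thesis
    using splice_snoc[OF assms, of _ x] by (auto simp: Wkl_def algebra_simps)
qed

lemma cls_eq_iff:
  "x \<in> L \<Longrightarrow> y \<in> L \<Longrightarrow> cls L k l x = cls L k l y \<longleftrightarrow> Wkl L k l x = Wkl L k l y"
  by (auto simp: cls_def)

lemma finite_Omega:
  fixes L :: "(int \<Rightarrow> 'a) set"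
  assumes "finite (UNIV :: 'a set)"
  shows "finite (Omega L k l)"
proof -
  have "Omega L k l = (\<lambda>W. {z \<in> L. Wkl L k l z = W}) ` Wkl L k l ` L"
    by (auto simp: Omega_def cls_def image_image)
  moreover have "Wkl L k l ` L \<subseteq> Pow {mu. set mu \<subseteq> UNIV \<and> length mu = nat (l - k - 1)}"
    by (auto simp: Wkl_def)
  moreover have "finite {mu::'a list. set mu \<subseteq> UNIV \<and> length mu = nat (l - k - 1)}"
    using assms by (rule finite_lists_length_eq)
  ultimately show ?thesis
    by (simp add: finite_subset)
qed

lemma bij_betw_matching_keys:
  assumes "inj_on f A" "inj_on g B" "f ` A = g ` B"
  shows "\<exists>\<phi>. bij_betw \<phi> A B \<and> (\<forall>p\<in>A. g (\<phi> p) = f p)"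
proof -
  have "bij_betw f A (g ` B)"
    using assms by (simp add: bij_betw_def)
  moreover have "bij_betw (the_inv_into B g) (g ` B) B"
    using assms(2) by (rule bij_betw_the_inv_into[OF inj_on_imp_bij_betw])
  ultimately have "bij_betw (the_inv_into B g \<circ> f) A B"
    by (rule bij_betw_trans)
  moreover have "\<forall>p\<in>A. g ((the_inv_into B g \<circ> f) p) = f p"
    using assms(3) f_the_inv_into_f[OF assms(2)] by (metis comp_apply image_eqI)
  ultimately show ?thesis by blast
qed

section \<open>The canonical pair of a subshift\<close>

text \<open>For \<open>u = [x]_{-1,l}\<close> this is \<open>W_{-1,l}(x)\<close>, independently of the representative;
  it will be shown to equal both \<open>F(u)\<close> and \<open>P(u)\<close>.\<close>
definition vertex_words :: "(int \<Rightarrow> 'a) set \<Rightarrow> nat \<Rightarrow> (int \<Rightarrow> 'a) set \<Rightarrow> 'a list set" where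
  "vertex_words L l u =
     {mu. \<exists>x\<in>L. u = cls L (-1) (int l) x \<and> mu \<in> Wkl L (-1) (int l) x}"

lemma length_vertex_words: "mu \<in> vertex_words L l u \<Longrightarrow> length mu = l"
  by (auto simp: vertex_words_def Wkl_def)

locale canonical_pair =
  fixes L :: "(int \<Rightarrow> 'a) set"
  assumes subshift: "subshift L"
begin

abbreviation vertex :: "nat \<Rightarrow> (int \<Rightarrow> 'a) \<Rightarrow> (int \<Rightarrow> 'a) set" where
  "vertex l x \<equiv> cls L (-1) (int l) x"

abbreviation fillers :: "nat \<Rightarrow> (int \<Rightarrow> 'a) \<Rightarrow> 'a list set" where
  "fillers l x \<equiv> Wkl L (-1) (int l) x"

lemma nonempty: "L \<noteq> {}"
  using subshift by (simp add: subshift_def)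

lemma shift_pow_mem: "x \<in> L \<Longrightarrow> shift_pow k x \<in> L"
proof (induction k rule: int_induct[where k = 0])
  case (step1 i)
  then have "shift (shift_pow i x) \<in> L"
    using subshift by (auto simp: subshift_def)
  then show ?case by (simp add: shift_eq_shift_pow_1 add.commute)
next
  case (step2 i)
  then obtain y where "y \<in> L" "shift_pow i x = shift y"
    using subshift by (auto simp: subshift_def)
  moreover have "shift_pow (i - 1) x = shift_pow (-1) (shift_pow i x)"
    by simp
  ultimately show ?case by (simp add: shift_eq_shift_pow_1)
qed simp

lemma shift_pow_mem_iff: "shift_pow k x \<in> L \<longleftrightarrow> x \<in> L"
  using shift_pow_mem[of x k] shift_pow_mem[of "shift_pow k x" "-k"] by auto

lemma Wkl_shift_pow: "Wkl L k l (shift_pow m x) = Wkl L (k + m) (l + m) x"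
  by (simp add: Wkl_def splice_shift_pow shift_pow_mem_iff)

lemma theta_cls:
  assumes "y \<in> L"
  shows "theta L l (cls L (- int l) 1 y) = vertex l (shift_pow (1 - int l) y)"
proof -
  define r where "r = (SOME x. x \<in> cls L (- int l) 1 y)"
  have "r \<in> cls L (- int l) 1 y"
    unfolding r_def by (rule someI[of _ y]) (simp add: cls_def assms)
  then have "r \<in> L" "Wkl L (- int l) 1 r = Wkl L (- int l) 1 y"
    by (auto simp: cls_def)
  then have "vertex l (shift_pow (1 - int l) r) = vertex l (shift_pow (1 - int l) y)"
    using assms by (simp add: cls_eq_iff Wkl_shift_pow shift_pow_mem)
  then show ?thesis unfolding theta_def r_def .
qed

lemma canV_iff: "u \<in> canV L l \<longleftrightarrow> (\<exists>x\<in>L. u = vertex l x)"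
  by (auto simp: canV_def Omega_def)

lemma canEp_iff: "e \<in> canEp L l \<longleftrightarrow> (\<exists>y\<in>L. e = (vertex l y, y (int l), vertex (Suc l) y))"
  by (auto simp: canEp_def canV_iff)

text \<open>The edges of \<open>E^-\<close> are defined through \<open>\<theta>\<close>; shifting the representative by
  \<open>-l\<close> moves their label \<open>y_{-l}\<close> to coordinate \<open>0\<close>.\<close>
lemma canEm_iff:
  "e \<in> canEm L k \<longleftrightarrow> (\<exists>z\<in>L. e = (vertex (Suc k) z, z 0, vertex k (shift_pow 1 z)))"
proof -
  have edge: "(theta L (Suc k) (cls L (- int (Suc k)) 1 y), y (- int k), theta L k (cls L (- int k) 1 y))
      = (vertex (Suc k) z, z 0, vertex k (shift_pow 1 z))"
    if "y \<in> L" "z = shift_pow (- int k) y" for y z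
    using that theta_cls[of y "Suc k"] theta_cls[of y k] by (simp add: shift_pow_apply)
  show ?thesis
  proof
    assume "e \<in> canEm L k"
    then obtain y where "y \<in> L" "e = (theta L (Suc k) (cls L (- int (Suc k)) 1 y), y (- int k),
        theta L k (cls L (- int k) 1 y))"
      by (auto simp: canEm_def)
    with edge[of y] show "\<exists>z\<in>L. e = (vertex (Suc k) z, z 0, vertex k (shift_pow 1 z))"
      by (metis shift_pow_mem)
  next
    assume "\<exists>z\<in>L. e = (vertex (Suc k) z, z 0, vertex k (shift_pow 1 z))"
    then obtain z where z: "z \<in> L" "e = (vertex (Suc k) z, z 0, vertex k (shift_pow 1 z))"
      by blast
    define y where "y = shift_pow (int k) z"
    have "y \<in> L" "z = shift_pow (- int k) y"
      using z by (simp_all add: y_def shift_pow_mem)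
    with z edge[of y z] show "e \<in> canEm L k"
      unfolding canEm_def by (auto simp: canV_iff theta_cls shift_pow_mem)
  qed
qed

lemma esrc_canEp: "e \<in> canEp L l \<Longrightarrow> esrc e \<in> canV L l"
  by (auto simp: canEp_def esrc_def)

lemma etgt_canEp: "e \<in> canEp L l \<Longrightarrow> etgt e \<in> canV L (Suc l)"
  by (auto simp: canEp_def etgt_def)

lemma esrc_canEm: "e \<in> canEm L l \<Longrightarrow> esrc e \<in> canV L (Suc l)"
  by (auto simp: canEm_def esrc_def)

lemma etgt_canEm: "e \<in> canEm L l \<Longrightarrow> etgt e \<in> canV L l"
  by (auto simp: canEm_def etgt_def)

lemma vertex_words_vertex: "x \<in> L \<Longrightarrow> vertex_words L l (vertex l x) = fillers l x"
  by (auto simp: vertex_words_def cls_eq_iff)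

lemma fillers_0: "x \<in> L \<Longrightarrow> fillers 0 x = {[]}"
proof -
  assume "x \<in> L"
  moreover have "splice (-1) 0 x [] = x"
    by (rule ext) (auto simp: splice_def)
  ultimately show ?thesis by (auto simp: Wkl_def)
qed

lemma canV_0: "canV L 0 = {L}"
proof -
  have "vertex 0 x = L" if "x \<in> L" for x
    using that fillers_0 by (auto simp: cls_def)
  then show ?thesis
    using nonempty by (auto simp: canV_iff)
qed

lemma vertex_words_nonempty: "u \<in> canV L l \<Longrightarrow> \<exists>mu. mu \<in> vertex_words L l u"
proof -
  assume "u \<in> canV L l"
  then obtain x where "x \<in> L" "u = vertex l x"
    by (auto simp: canV_iff)
  then show ?thesis
    using window_mem_Wkl vertex_words_vertex by blast
qed

lemma Nil_mem_vertex_words_0: "u \<in> canV L 0 \<Longrightarrow> [] \<in> vertex_words L 0 u"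
  using vertex_words_nonempty length_vertex_words by fastforce

lemma fillers_snoc: "fillers l y = {mu. mu @ [y (int l)] \<in> fillers (Suc l) y}"
  using Wkl_shrink_right[of "-1" "int l + 1" L y] by (simp add: add.commute)

lemma fillers_Cons_shift: "fillers k (shift_pow 1 z) = {mu. z 0 # mu \<in> fillers (Suc k) z}"
  using Wkl_shrink_left[of "-1" "int k + 1" L z] by (simp add: Wkl_shift_pow add.commute)

lemma snoc_mem_vertex_words_etgt:
  assumes "e \<in> canEp L l" "mu \<in> vertex_words L l (esrc e)"
  shows "mu @ [elab e] \<in> vertex_words L (Suc l) (etgt e)"
proof -
  obtain y where y: "y \<in> L" "e = (vertex l y, y (int l), vertex (Suc l) y)"
    using assms(1) by (auto simp: canEp_iff)
  with assms(2) fillers_snoc[of l y] vertex_words_vertex[of y "Suc l"] show ?thesis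
    by (simp add: vertex_words_vertex esrc_def elab_def etgt_def)
qed

lemma snoc_mem_vertex_wordsE:
  assumes "mu @ [a] \<in> vertex_words L (Suc l) u"
  obtains u' where "(u', a, u) \<in> canEp L l" "mu \<in> vertex_words L l u'"
proof -
  obtain x where x: "x \<in> L" "u = vertex (Suc l) x" "mu @ [a] \<in> fillers (Suc l) x"
    using assms by (auto simp: vertex_words_def)
  define y where "y = splice (-1) (int (Suc l)) x (mu @ [a])"
  have y: "y \<in> L" "fillers (Suc l) y = fillers (Suc l) x"
    using x(3) by (simp_all add: y_def splice_mem Wkl_splice)
  have "y (int l) = a"
    using length_vertex_words[OF assms] by (simp add: y_def splice_def nth_append)
  moreover have "u = vertex (Suc l) y"
    using x(2) y cls_eq_iff[OF x(1) y(1)] by simp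
  ultimately have "(vertex l y, a, u) \<in> canEp L l"
    using y(1) unfolding canEp_iff by blast
  moreover have "mu \<in> vertex_words L l (vertex l y)"
    using x(3) y \<open>y (int l) = a\<close> fillers_snoc[of l y] by (simp add: vertex_words_vertex)
  ultimately show thesis by (rule that)
qed

lemma Cons_mem_vertex_words_esrc:
  assumes "e \<in> canEm L k" "mu \<in> vertex_words L k (etgt e)"
  shows "elab e # mu \<in> vertex_words L (Suc k) (esrc e)"
proof -
  obtain z where z: "z \<in> L" "e = (vertex (Suc k) z, z 0, vertex k (shift_pow 1 z))"
    using assms(1) by (auto simp: canEm_iff)
  with assms(2) fillers_Cons_shift[of k z] vertex_words_vertex[of z "Suc k"] show ?thesis
    by (simp add: vertex_words_vertex shift_pow_mem esrc_def elab_def etgt_def)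
qed

lemma Cons_mem_vertex_wordsE:
  assumes "b # mu \<in> vertex_words L (Suc k) w"
  obtains u where "(w, b, u) \<in> canEm L k" "mu \<in> vertex_words L k u"
proof -
  obtain x where x: "x \<in> L" "w = vertex (Suc k) x" "b # mu \<in> fillers (Suc k) x"
    using assms by (auto simp: vertex_words_def)
  define z where "z = splice (-1) (int (Suc k)) x (b # mu)"
  have z: "z \<in> L" "fillers (Suc k) z = fillers (Suc k) x"
    using x(3) by (simp_all add: z_def splice_mem Wkl_splice)
  have "z 0 = b"
    by (simp add: z_def splice_def)
  moreover have "w = vertex (Suc k) z"
    using x(2) z cls_eq_iff[OF x(1) z(1)] by simp
  ultimately have "(w, b, vertex k (shift_pow 1 z)) \<in> canEm L k"
    using z(1) unfolding canEm_iff by blast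
  moreover have "mu \<in> vertex_words L k (vertex k (shift_pow 1 z))"
    using x(3) z \<open>z 0 = b\<close> fillers_Cons_shift[of k z] shift_pow_mem[OF z(1)]
    by (simp add: vertex_words_vertex)
  ultimately show thesis by (rule that)
qed

lemma canEm_right_resolving:
  assumes "e \<in> canEm L l" "e' \<in> canEm L l" "esrc e = esrc e'" "elab e = elab e'"
  shows "e = e'"
proof -
  obtain z z' where z: "z \<in> L" "e = (vertex (Suc l) z, z 0, vertex l (shift_pow 1 z))"
    and z': "z' \<in> L" "e' = (vertex (Suc l) z', z' 0, vertex l (shift_pow 1 z'))"
    using assms(1,2) by (auto simp: canEm_iff)
  then have "fillers (Suc l) z = fillers (Suc l) z'" "z 0 = z' 0"
    using assms(3,4) cls_eq_iff[OF z(1) z'(1)] by (simp_all add: esrc_def elab_def)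
  then have "fillers l (shift_pow 1 z) = fillers l (shift_pow 1 z')"
    by (simp add: fillers_Cons_shift)
  then show ?thesis
    using z z' assms(3,4) cls_eq_iff[OF shift_pow_mem[OF z(1)] shift_pow_mem[OF z'(1)]]
    by (simp add: esrc_def elab_def)
qed

lemma canEp_left_resolving:
  assumes "e \<in> canEp L l" "e' \<in> canEp L l" "etgt e = etgt e'" "elab e = elab e'"
  shows "e = e'"
proof -
  obtain y y' where y: "y \<in> L" "e = (vertex l y, y (int l), vertex (Suc l) y)"
    and y': "y' \<in> L" "e' = (vertex l y', y' (int l), vertex (Suc l) y')"
    using assms(1,2) by (auto simp: canEp_iff)
  then have "fillers (Suc l) y = fillers (Suc l) y'" "y (int l) = y' (int l)"
    using assms(3,4) cls_eq_iff[OF y(1) y'(1)] by (simp_all add: etgt_def elab_def)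
  then have "fillers l y = fillers l y'"
    by (simp add: fillers_snoc[of l y] fillers_snoc[of l y'])
  then show ?thesis
    using y y' assms(3,4) cls_eq_iff[OF y(1) y'(1)] by (simp add: etgt_def elab_def)
qed

lemma ex_canEm_etgt: "v \<in> canV L l \<Longrightarrow> \<exists>e\<in>canEm L l. etgt e = v"
proof -
  assume "v \<in> canV L l"
  then obtain x where x: "x \<in> L" "v = vertex l x" by (auto simp: canV_iff)
  then have "(vertex (Suc l) (shift_pow (-1) x), x (-1), v) \<in> canEm L l"
    unfolding canEm_iff using shift_pow_mem by (fastforce simp: shift_pow_apply)
  then show ?thesis by (force simp: etgt_def)
qed

lemma ex_canEm_esrc: "v \<in> canV L (Suc l) \<Longrightarrow> \<exists>e\<in>canEm L l. esrc e = v"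
  by (force simp: canV_iff canEm_iff esrc_def)

lemma ex_canEp_esrc: "v \<in> canV L l \<Longrightarrow> \<exists>e\<in>canEp L l. esrc e = v"
  by (force simp: canV_iff canEp_iff esrc_def)

lemma ex_canEp_etgt: "v \<in> canV L (Suc l) \<Longrightarrow> \<exists>e\<in>canEp L l. etgt e = v"
  by (force simp: canV_iff canEp_iff etgt_def)

section \<open>The local property\<close>

text \<open>Both halves glue the window \<open>0..l\<close> of the configuration representing the edge
  between \<open>V_l\<close> and \<open>V_{l+1}\<close> into the one representing the edge between \<open>V_{l+1}\<close>
  and \<open>V_{l+2}\<close>; this is possible because both represent the same vertex of \<open>V_{l+1}\<close>.\<close>

lemma local_property_forth:
  assumes "em \<in> canEm L l" "ep \<in> canEp L (Suc l)" "esrc em = esrc ep"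
  obtains fp fm where "fp \<in> canEp L l" "fm \<in> canEm L (Suc l)" "esrc fp = etgt em"
    "etgt fp = etgt fm" "esrc fm = etgt ep" "elab fm = elab em" "elab fp = elab ep"
proof -
  obtain z where z: "z \<in> L" "em = (vertex (Suc l) z, z 0, vertex l (shift_pow 1 z))"
    using assms(1) by (auto simp: canEm_iff)
  obtain y where y: "y \<in> L" "ep = (vertex (Suc l) y, y (int (Suc l)), vertex (Suc (Suc l)) y)"
    using assms(2) by (auto simp: canEp_iff)
  have fillers_eq: "fillers (Suc l) z = fillers (Suc l) y"
    using z y assms(3) cls_eq_iff[OF z(1) y(1)] by (simp add: esrc_def)
  obtain w where w: "w \<in> L" and inside: "\<And>n. -1 < n \<Longrightarrow> n < int (Suc l) \<Longrightarrow> w n = z n"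
    and outside: "\<And>n. n \<le> -1 \<or> int (Suc l) \<le> n \<Longrightarrow> w n = y n"
    using glue_by_Wkl[OF z(1) fillers_eq] by blast
  have fillers_Suc: "fillers (Suc l) w = fillers (Suc l) y"
    by (rule Wkl_cong_outside) (simp add: outside)
  have fillers_Suc_Suc: "fillers (Suc (Suc l)) w = fillers (Suc (Suc l)) y"
    by (rule Wkl_cong_outside) (auto intro: outside)
  have "w 0 = z 0" "w (int (Suc l)) = y (int (Suc l))"
    by (simp_all add: inside outside)
  then have fillers_shift: "fillers l (shift_pow 1 w) = fillers l (shift_pow 1 z)"
    using fillers_Cons_shift[of l w] fillers_Cons_shift[of l z] fillers_Suc fillers_eq by simp
  show thesis
  proof (rule that)
    show "(vertex (Suc (Suc l)) w, w 0, vertex (Suc l) (shift_pow 1 w)) \<in> canEm L (Suc l)"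
      "(vertex l (shift_pow 1 w), w (int (Suc l)), vertex (Suc l) (shift_pow 1 w)) \<in> canEp L l"
      using w shift_pow_mem by (auto simp: canEm_iff canEp_iff shift_pow_apply add.commute)
  qed (use z y w fillers_shift fillers_Suc_Suc \<open>w 0 = z 0\<close> \<open>w (int (Suc l)) = y (int (Suc l))\<close> in
    \<open>simp_all add: esrc_def etgt_def elab_def cls_eq_iff shift_pow_mem\<close>)
qed

lemma local_property_back:
  assumes "fp \<in> canEp L l" "fm \<in> canEm L (Suc l)" "etgt fp = etgt fm"
  obtains em ep where "em \<in> canEm L l" "ep \<in> canEp L (Suc l)" "etgt em = esrc fp"
    "esrc em = esrc ep" "etgt ep = esrc fm" "elab em = elab fm" "elab ep = elab fp"
proof -
  obtain y where y: "y \<in> L" "fp = (vertex l y, y (int l), vertex (Suc l) y)"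
    using assms(1) by (auto simp: canEp_iff)
  obtain z where z: "z \<in> L" "fm = (vertex (Suc (Suc l)) z, z 0, vertex (Suc l) (shift_pow 1 z))"
    using assms(2) by (auto simp: canEm_iff)
  have fillers_eq: "fillers (Suc l) y = fillers (Suc l) (shift_pow 1 z)"
    using z y assms(3) cls_eq_iff[OF y(1) shift_pow_mem[OF z(1)]] by (simp add: etgt_def)
  obtain t where t: "t \<in> L" and inside: "\<And>n. -1 < n \<Longrightarrow> n < int (Suc l) \<Longrightarrow> t n = y n"
    and outside: "\<And>n. n \<le> -1 \<or> int (Suc l) \<le> n \<Longrightarrow> t n = shift_pow 1 z n"
    using glue_by_Wkl[OF y(1) fillers_eq] by blast
  define w where "w = shift_pow (-1) t"
  have w: "w \<in> L" "shift_pow 1 w = t"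
    using t shift_pow_mem by (simp_all add: w_def)
  have "fillers (Suc l) t = fillers (Suc l) (shift_pow 1 z)"
    by (rule Wkl_cong_outside) (simp add: outside)
  moreover have "t (int l) = y (int l)"
    by (simp add: inside)
  ultimately have fillers_t: "fillers l t = fillers l y"
    using fillers_snoc[of l t] fillers_snoc[of l y] fillers_eq by simp
  have fillers_w: "fillers (Suc (Suc l)) w = fillers (Suc (Suc l)) z"
  proof (rule Wkl_cong_outside)
    fix n :: int
    assume "n \<le> -1 \<or> int (Suc (Suc l)) \<le> n"
    then have "n - 1 \<le> -1 \<or> int (Suc l) \<le> n - 1"
      by auto
    then show "w n = z n"
      using outside[of "n - 1"] by (simp add: w_def shift_pow_apply)
  qed
  have "w 0 = z 0" "w (int (Suc l)) = y (int l)"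
    by (simp_all add: w_def shift_pow_apply outside inside)
  show thesis
  proof (rule that)
    show "(vertex (Suc l) w, w 0, vertex l (shift_pow 1 w)) \<in> canEm L l"
      "(vertex (Suc l) w, w (int (Suc l)), vertex (Suc (Suc l)) w) \<in> canEp L (Suc l)"
      using w by (auto simp: canEm_iff canEp_iff)
  qed (use y z w t fillers_t fillers_w \<open>w 0 = z 0\<close> \<open>w (int (Suc l)) = y (int l)\<close> in
    \<open>simp_all add: esrc_def etgt_def elab_def cls_eq_iff\<close>)
qed

lemma inj_on_elab_Em_Ep_pairs:
  "inj_on (map_prod elab elab)
     {(em, ep). em \<in> canEm L l \<and> ep \<in> canEp L (Suc l) \<and> esrc em = esrc ep \<and> etgt ep = v}"
proof (rule inj_onI)
  fix p p'
  assume "p \<in> {(em, ep). em \<in> canEm L l \<and> ep \<in> canEp L (Suc l) \<and> esrc em = esrc ep \<and> etgt ep = v}"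
    and "p' \<in> {(em, ep). em \<in> canEm L l \<and> ep \<in> canEp L (Suc l) \<and> esrc em = esrc ep \<and> etgt ep = v}"
    and "map_prod elab elab p = map_prod elab elab p'"
  moreover obtain em ep em' ep' where "p = (em, ep)" "p' = (em', ep')"
    by (cases p, cases p') simp
  ultimately show "p = p'"
    using canEp_left_resolving[of "snd p" "Suc l" "snd p'"] canEm_right_resolving[of "fst p" l "fst p'"]
    by auto
qed

lemma inj_on_elab_Ep_Em_pairs:
  "inj_on (map_prod elab elab)
     {(fp, fm). fp \<in> canEp L l \<and> fm \<in> canEm L (Suc l) \<and> etgt fp = etgt fm \<and> esrc fm = v}"
proof (rule inj_onI)
  fix q q'
  assume "q \<in> {(fp, fm). fp \<in> canEp L l \<and> fm \<in> canEm L (Suc l) \<and> etgt fp = etgt fm \<and> esrc fm = v}"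
    and "q' \<in> {(fp, fm). fp \<in> canEp L l \<and> fm \<in> canEm L (Suc l) \<and> etgt fp = etgt fm \<and> esrc fm = v}"
    and "map_prod elab elab q = map_prod elab elab q'"
  moreover obtain fp fm fp' fm' where "q = (fp, fm)" "q' = (fp', fm')"
    by (cases q, cases q') simp
  ultimately show "q = q'"
    using canEm_right_resolving[of "snd q" "Suc l" "snd q'"] canEp_left_resolving[of "fst q" l "fst q'"]
    by auto
qed

lemma local_property:
  fixes l :: nat and u v
  defines "A \<equiv> {(em, ep). em \<in> canEm L l \<and> ep \<in> canEp L (Suc l) \<and> etgt em = u
                   \<and> esrc em = esrc ep \<and> etgt ep = v}"
    and "B \<equiv> {(fp, fm). fp \<in> canEp L l \<and> fm \<in> canEm L (Suc l) \<and> esrc fp = u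
                   \<and> etgt fp = etgt fm \<and> esrc fm = v}"
  shows "\<exists>\<phi>. bij_betw \<phi> A B
           \<and> (\<forall>p\<in>A. elab (fst p) = elab (snd (\<phi> p)) \<and> elab (snd p) = elab (fst (\<phi> p)))"
proof -
  let ?f = "map_prod elab elab" and ?g = "prod.swap \<circ> map_prod elab elab"
  have "inj_on ?f A"
    by (rule inj_on_subset[OF inj_on_elab_Em_Ep_pairs[of l v]]) (auto simp: A_def)
  moreover have "inj_on ?g B"
    by (rule comp_inj_on[OF inj_on_subset[OF inj_on_elab_Ep_Em_pairs[of l v]] inj_swap])
      (auto simp: B_def)
  moreover have "?f ` A \<subseteq> ?g ` B"
  proof
    fix k assume "k \<in> ?f ` A"
    then obtain em ep where em_ep: "em \<in> canEm L l" "ep \<in> canEp L (Suc l)" "etgt em = u"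
      "esrc em = esrc ep" "etgt ep = v" "k = (elab em, elab ep)"
      by (auto simp: A_def)
    obtain fp fm where "fp \<in> canEp L l" "fm \<in> canEm L (Suc l)" "esrc fp = etgt em"
      "etgt fp = etgt fm" "esrc fm = etgt ep" "elab fm = elab em" "elab fp = elab ep"
      using em_ep(1,2,4) by (rule local_property_forth)
    with em_ep show "k \<in> ?g ` B"
      by (intro rev_image_eqI[of "(fp, fm)"]) (simp_all add: B_def)
  qed
  moreover have "?g ` B \<subseteq> ?f ` A"
  proof
    fix k assume "k \<in> ?g ` B"
    then obtain fp fm where fp_fm: "fp \<in> canEp L l" "fm \<in> canEm L (Suc l)" "esrc fp = u"
      "etgt fp = etgt fm" "esrc fm = v" "k = (elab fm, elab fp)"
      by (auto simp: B_def)
    obtain em ep where "em \<in> canEm L l" "ep \<in> canEp L (Suc l)" "etgt em = esrc fp"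
      "esrc em = esrc ep" "etgt ep = esrc fm" "elab em = elab fm" "elab ep = elab fp"
      using fp_fm(1,2,4) by (rule local_property_back)
    with fp_fm show "k \<in> ?f ` A"
      by (intro rev_image_eqI[of "(em, ep)"]) (simp_all add: A_def)
  qed
  ultimately obtain \<phi> where "bij_betw \<phi> A B" "\<forall>p\<in>A. ?g (\<phi> p) = ?f p"
    using bij_betw_matching_keys[of ?f A ?g B] by blast
  then show ?thesis
    by (auto simp: prod_eq_iff)
qed

section \<open>Words along paths\<close>

lemma append_Ep_path_mem_vertex_words:
  assumes "1 \<le> n" "\<forall>i<n. e i \<in> canEp L (m + i)"
    "\<forall>i. Suc i < n \<longrightarrow> etgt (e i) = esrc (e (Suc i))"
    "mu \<in> vertex_words L m (esrc (e 0))"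
  shows "mu @ map (\<lambda>i. elab (e i)) [0..<n] \<in> vertex_words L (m + n) (etgt (e (n - 1)))"
  using assms
proof (induction n rule: nat_induct_at_least)
  case base
  then show ?case
    using snoc_mem_vertex_words_etgt[of "e 0" m mu] by simp
next
  case (Suc n)
  have "mu @ map (\<lambda>i. elab (e i)) [0..<n] \<in> vertex_words L (m + n) (etgt (e (n - 1)))"
    using Suc.prems by (intro Suc.IH) auto
  moreover have "etgt (e (n - 1)) = esrc (e n)"
    using Suc.prems(2)[rule_format, of "n - 1"] Suc.hyps by simp
  moreover have "e n \<in> canEp L (m + n)"
    using Suc.prems(1) by simp
  ultimately show ?case
    using snoc_mem_vertex_words_etgt[of "e n" "m + n" "mu @ map (\<lambda>i. elab (e i)) [0..<n]"] by simp
qed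

lemma Cons_Em_path_mem_vertex_words:
  assumes "1 \<le> n" "\<forall>i<n. f i \<in> canEm L (m + n - 1 - i)"
    "\<forall>i. Suc i < n \<longrightarrow> etgt (f i) = esrc (f (Suc i))"
    "mu \<in> vertex_words L m (etgt (f (n - 1)))"
  shows "map (\<lambda>i. elab (f i)) [0..<n] @ mu \<in> vertex_words L (m + n) (esrc (f 0))"
  using assms
proof (induction n arbitrary: f rule: nat_induct_at_least)
  case base
  then show ?case
    using Cons_mem_vertex_words_esrc[of "f 0" m mu] by simp
next
  case (Suc n)
  have "map (\<lambda>i. elab (f (Suc i))) [0..<n] @ mu \<in> vertex_words L (m + n) (esrc (f (Suc 0)))"
  proof (rule Suc.IH)
    show "\<forall>i<n. f (Suc i) \<in> canEm L (m + n - 1 - i)"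
      using Suc.prems(1) by auto
    show "\<forall>i. Suc i < n \<longrightarrow> etgt (f (Suc i)) = esrc (f (Suc (Suc i)))"
      using Suc.prems(2) by auto
    show "mu \<in> vertex_words L m (etgt (f (Suc (n - 1))))"
      using Suc.prems(3) Suc.hyps by simp
  qed
  moreover have "etgt (f 0) = esrc (f 1)"
    using Suc.prems(2) Suc.hyps by auto
  moreover have "f 0 \<in> canEm L (m + n)"
    using Suc.prems(1) by auto
  ultimately show ?case
    using Cons_mem_vertex_words_esrc[of "f 0" "m + n" "map (\<lambda>i. elab (f (Suc i))) [0..<n] @ mu"]
    by (simp del: upt_Suc add: map_upt_Suc)
qed

lemma vertex_words_Ep_path:
  "mu \<in> vertex_words L l u \<Longrightarrow> \<exists>e. (\<forall>k\<in>{1..l}. e k \<in> canEp L (k - 1)) \<and> etgt (e l) = u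
     \<and> (\<forall>k\<in>{1..<l}. etgt (e k) = esrc (e (Suc k))) \<and> map (\<lambda>k. elab (e k)) [1..<Suc l] = mu"
proof (induction l arbitrary: mu u)
  case 0
  \<comment> \<open>the path is empty, but the definition of \<open>P(u)\<close> still asks the unused edge
    \<open>e 0\<close> to end at \<open>u\<close>\<close>
  then show ?case
    using length_vertex_words[OF 0] by (intro exI[of _ "\<lambda>_. (u, undefined, u)"]) (simp add: etgt_def)
next
  case (Suc l)
  obtain mu' a where mu: "mu = mu' @ [a]"
    using length_vertex_words[OF Suc.prems] by (metis append_butlast_last_id length_0_conv nat.distinct(1))
  obtain u' where u': "(u', a, u) \<in> canEp L l" "mu' \<in> vertex_words L l u'"
    using Suc.prems unfolding mu by (rule snoc_mem_vertex_wordsE)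
  obtain e where e: "\<forall>k\<in>{1..l}. e k \<in> canEp L (k - 1)" "etgt (e l) = u'"
    "\<forall>k\<in>{1..<l}. etgt (e k) = esrc (e (Suc k))" "map (\<lambda>k. elab (e k)) [1..<Suc l] = mu'"
    using Suc.IH[OF u'(2)] by blast
  define e' where "e' = e(Suc l := (u', a, u))"
  have "\<forall>k\<in>{1..Suc l}. e' k \<in> canEp L (k - 1)"
    using e(1) u'(1) by (auto simp: e'_def le_Suc_eq)
  moreover have "\<forall>k\<in>{1..<Suc l}. etgt (e' k) = esrc (e' (Suc k))"
    using e(2,3) by (auto simp: e'_def esrc_def less_Suc_eq)
  moreover have "map (\<lambda>k. elab (e' k)) [1..<Suc l] = mu'"
    unfolding e(4)[symmetric] e'_def by (rule map_cong) auto
  then have "map (\<lambda>k. elab (e' k)) [1..<Suc (Suc l)] = mu"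
    by (simp add: mu e'_def elab_def)
  ultimately show ?case
    by (intro exI[of _ e']) (simp add: e'_def etgt_def)
qed

lemma vertex_words_Em_path:
  "mu \<in> vertex_words L l u \<Longrightarrow> \<exists>f. (\<forall>k\<in>{1..l}. f k \<in> canEm L (k - 1)) \<and> esrc (f l) = u
     \<and> (\<forall>k\<in>{2..l}. etgt (f k) = esrc (f (k - 1))) \<and> map (\<lambda>k. elab (f k)) (rev [1..<Suc l]) = mu"
proof (induction l arbitrary: mu u)
  case 0
  then show ?case
    using length_vertex_words[OF 0] by (intro exI[of _ "\<lambda>_. (u, undefined, u)"]) (simp add: esrc_def)
next
  case (Suc l)
  obtain b mu' where mu: "mu = b # mu'"
    using length_vertex_words[OF Suc.prems] by (metis length_Suc_conv)
  obtain u' where u': "(u, b, u') \<in> canEm L l" "mu' \<in> vertex_words L l u'"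
    using Suc.prems unfolding mu by (rule Cons_mem_vertex_wordsE)
  obtain f where f: "\<forall>k\<in>{1..l}. f k \<in> canEm L (k - 1)" "esrc (f l) = u'"
    "\<forall>k\<in>{2..l}. etgt (f k) = esrc (f (k - 1))" "map (\<lambda>k. elab (f k)) (rev [1..<Suc l]) = mu'"
    using Suc.IH[OF u'(2)] by blast
  define f' where "f' = f(Suc l := (u, b, u'))"
  have "\<forall>k\<in>{1..Suc l}. f' k \<in> canEm L (k - 1)"
    using f(1) u'(1) by (auto simp: f'_def le_Suc_eq)
  moreover have "\<forall>k\<in>{2..Suc l}. etgt (f' k) = esrc (f' (k - 1))"
    using f(2,3) by (auto simp: f'_def etgt_def le_Suc_eq)
  moreover have "map (\<lambda>k. elab (f' k)) (rev [1..<Suc l]) = mu'"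
    unfolding f(4)[symmetric] f'_def by (rule map_cong) auto
  then have "map (\<lambda>k. elab (f' k)) (rev [1..<Suc (Suc l)]) = mu"
    by (simp add: mu f'_def elab_def)
  ultimately show ?case
    by (intro exI[of _ f']) (simp add: f'_def esrc_def)
qed

lemma Pwords_eq_vertex_words:
  assumes "1 \<le> l"
  shows "Pwords (canEp L) esrc etgt elab l u = vertex_words L l u"
proof
  show "Pwords (canEp L) esrc etgt elab l u \<subseteq> vertex_words L l u"
  proof
    fix mu assume "mu \<in> Pwords (canEp L) esrc etgt elab l u"
    then obtain e where mu: "mu = map (\<lambda>k. elab (e k)) [1..<Suc l]"
      and path: "\<forall>k\<in>{1..l}. e k \<in> canEp L (k - 1)" "etgt (e l) = u"
        "\<forall>k\<in>{1..<l}. etgt (e k) = esrc (e (Suc k))"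
      unfolding Pwords_def by blast
    have "[] \<in> vertex_words L 0 (esrc (e 1))"
      using bspec[OF path(1), of 1] assms by (intro Nil_mem_vertex_words_0 esrc_canEp) simp
    moreover have "\<forall>i<l. e (Suc i) \<in> canEp L (0 + i)"
    proof (intro allI impI)
      fix i assume "i < l"
      then show "e (Suc i) \<in> canEp L (0 + i)" using bspec[OF path(1), of "Suc i"] by simp
    qed
    moreover have "\<forall>i. Suc i < l \<longrightarrow> etgt (e (Suc i)) = esrc (e (Suc (Suc i)))"
      using path(3) by (auto dest: bspec[of _ _ "Suc _"])
    ultimately have "[] @ map (\<lambda>i. elab (e (Suc i))) [0..<l] \<in> vertex_words L (0 + l) (etgt (e (Suc (l - 1))))"
      using assms by (intro append_Ep_path_mem_vertex_words[of l "\<lambda>i. e (Suc i)"]) auto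
    moreover have "map (\<lambda>i. elab (e (Suc i))) [0..<l] = mu"
      unfolding mu by (rule nth_equalityI) (auto simp del: upt_Suc)
    ultimately show "mu \<in> vertex_words L l u"
      using path(2) assms by simp
  qed
  show "vertex_words L l u \<subseteq> Pwords (canEp L) esrc etgt elab l u"
    using vertex_words_Ep_path unfolding Pwords_def by blast
qed

lemma Fwords_eq_vertex_words:
  assumes "1 \<le> l"
  shows "Fwords (canEm L) esrc etgt elab l u = vertex_words L l u"
proof
  show "Fwords (canEm L) esrc etgt elab l u \<subseteq> vertex_words L l u"
  proof
    fix mu assume "mu \<in> Fwords (canEm L) esrc etgt elab l u"
    then obtain f where mu: "mu = map (\<lambda>k. elab (f k)) (rev [1..<Suc l])"
      and path: "\<forall>k\<in>{1..l}. f k \<in> canEm L (k - 1)" "esrc (f l) = u"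
        "\<forall>k\<in>{2..l}. etgt (f k) = esrc (f (k - 1))"
      unfolding Fwords_def by blast
    have "[] \<in> vertex_words L 0 (etgt (f 1))"
      using bspec[OF path(1), of 1] assms by (intro Nil_mem_vertex_words_0 etgt_canEm) simp
    moreover have "\<forall>i<l. f (l - i) \<in> canEm L (0 + l - 1 - i)"
    proof (intro allI impI)
      fix i assume "i < l"
      then show "f (l - i) \<in> canEm L (0 + l - 1 - i)" using bspec[OF path(1), of "l - i"] by simp
    qed
    moreover have "\<forall>i. Suc i < l \<longrightarrow> etgt (f (l - i)) = esrc (f (l - Suc i))"
      using path(3) by (auto dest: bspec[of _ _ "l - _"])
    ultimately have "map (\<lambda>i. elab (f (l - i))) [0..<l] @ [] \<in> vertex_words L (0 + l) (esrc (f (l - 0)))"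
      using assms by (intro Cons_Em_path_mem_vertex_words[of l "\<lambda>i. f (l - i)"]) auto
    moreover have "map (\<lambda>i. elab (f (l - i))) [0..<l] = mu"
      unfolding mu by (rule nth_equalityI) (auto simp: rev_nth Suc_diff_Suc simp del: upt_Suc)
    ultimately show "mu \<in> vertex_words L l u"
      using path(2) by simp
  qed
  show "vertex_words L l u \<subseteq> Fwords (canEm L) esrc etgt elab l u"
    using vertex_words_Em_path unfolding Fwords_def by blast
qed

lemma infix_vertex_words_admissible:
  assumes "a @ w @ b \<in> vertex_words L l u" "w \<noteq> []"
  shows "w \<in> admissible_words L"
proof -
  obtain x where x: "x \<in> L" "a @ w @ b \<in> fillers l x"
    using assms(1) by (auto simp: vertex_words_def)
  have len: "length (a @ w @ b) = l"
    using length_vertex_words[OF assms(1)] .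
  define y where "y = splice (-1) (int l) x (a @ w @ b)"
  have "y (int (length a) + int i) = w ! i" if "i < length w" for i
  proof -
    have "y (int (length a) + int i) = (a @ w @ b) ! nat (int (length a) + int i - -1 - 1)"
      unfolding y_def using that len by (intro splice_inside) auto
    also have "\<dots> = w ! i"
      using that by (simp add: nat_add_distrib nth_append)
    finally show ?thesis .
  qed
  moreover have "y \<in> L"
    using x(2) by (simp add: y_def splice_mem)
  ultimately show ?thesis
    using assms(2) unfolding admissible_words_def by blast
qed

lemma admissible_word_at_origin:
  assumes "w \<in> admissible_words L"
  obtains x where "x \<in> L" "\<forall>i<length w. x (int i) = w ! i" "w \<noteq> []"
proof -
  obtain x n where "w \<noteq> []" "x \<in> L" "\<forall>i<length w. x (n + int i) = w ! i"
    using assms by (auto simp: admissible_words_def)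
  then show thesis
    by (intro that[of "shift_pow n x"]) (simp_all add: shift_pow_mem shift_pow_apply add.commute)
qed

lemma Wplus_eq_admissible_words: "Wplus (canEp L) esrc etgt elab = admissible_words L"
proof
  show "Wplus (canEp L) esrc etgt elab \<subseteq> admissible_words L"
  proof
    fix w assume "w \<in> Wplus (canEp L) esrc etgt elab"
    then obtain e n m where w: "w = map (\<lambda>i. elab (e i)) [0..<n]" and path: "1 \<le> n"
      "\<forall>i<n. e i \<in> canEp L (m + i)" "\<forall>i. Suc i < n \<longrightarrow> etgt (e i) = esrc (e (Suc i))"
      by (auto simp: Wplus_def)
    obtain mu where "mu \<in> vertex_words L m (esrc (e 0))"
      using path vertex_words_nonempty esrc_canEp by (metis add_0_right less_le_trans zero_less_one)
    then have "mu @ w @ [] \<in> vertex_words L (m + n) (etgt (e (n - 1)))"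
      using append_Ep_path_mem_vertex_words[OF path] w by simp
    then show "w \<in> admissible_words L"
      by (rule infix_vertex_words_admissible) (use path(1) w in auto)
  qed
  show "admissible_words L \<subseteq> Wplus (canEp L) esrc etgt elab"
  proof
    fix w assume "w \<in> admissible_words L"
    then obtain x where x: "x \<in> L" "\<forall>i<length w. x (int i) = w ! i" "w \<noteq> []"
      by (rule admissible_word_at_origin)
    define e where "e i = (vertex i x, x (int i), vertex (Suc i) x)" for i
    have "w = map (\<lambda>i. elab (e i)) [0..<length w]"
      using x(2) by (intro nth_equalityI) (simp_all add: e_def elab_def)
    moreover have "\<forall>i<length w. e i \<in> canEp L (0 + i)"
      using x(1) unfolding e_def canEp_iff by auto
    moreover have "\<forall>i. Suc i < length w \<longrightarrow> etgt (e i) = esrc (e (Suc i))"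
      by (simp add: e_def esrc_def etgt_def)
    ultimately show "w \<in> Wplus (canEp L) esrc etgt elab"
      unfolding Wplus_def using x(3)
      by (intro CollectI exI[of _ e] exI[of _ "length w"] exI[of _ "0::nat"]) (simp add: Suc_leI)
  qed
qed

lemma Wminus_eq_admissible_words: "Wminus (canEm L) esrc etgt elab = admissible_words L"
proof
  show "Wminus (canEm L) esrc etgt elab \<subseteq> admissible_words L"
  proof
    fix w assume "w \<in> Wminus (canEm L) esrc etgt elab"
    then obtain f n m where w: "w = map (\<lambda>i. elab (f i)) [0..<n]" and path: "1 \<le> n"
      "\<forall>i<n. f i \<in> canEm L (m + n - 1 - i)" "\<forall>i. Suc i < n \<longrightarrow> etgt (f i) = esrc (f (Suc i))"
      by (auto simp: Wminus_def)
    have "f (n - 1) \<in> canEm L m"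
      using path(1) path(2)[rule_format, of "n - 1"] by simp
    then obtain mu where "mu \<in> vertex_words L m (etgt (f (n - 1)))"
      using vertex_words_nonempty etgt_canEm by blast
    then have "[] @ w @ mu \<in> vertex_words L (m + n) (esrc (f 0))"
      using Cons_Em_path_mem_vertex_words[OF path] w by simp
    then show "w \<in> admissible_words L"
      by (rule infix_vertex_words_admissible) (use path(1) w in auto)
  qed
  show "admissible_words L \<subseteq> Wminus (canEm L) esrc etgt elab"
  proof
    fix w assume "w \<in> admissible_words L"
    then obtain x where x: "x \<in> L" "\<forall>i<length w. x (int i) = w ! i" "w \<noteq> []"
      by (rule admissible_word_at_origin)
    define n where "n = length w"
    define f where "f i = (vertex (Suc (n - 1 - i)) (shift_pow (int i) x), x (int i),
        vertex (n - 1 - i) (shift_pow (int (Suc i)) x))" for i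
    have "w = map (\<lambda>i. elab (f i)) [0..<n]"
      using x(2) by (intro nth_equalityI) (simp_all add: f_def elab_def n_def)
    moreover have "\<forall>i<n. f i \<in> canEm L (0 + n - 1 - i)"
      using x(1) shift_pow_mem unfolding f_def canEm_iff
      by (auto simp: shift_pow_apply add.commute)
    moreover have "\<forall>i. Suc i < n \<longrightarrow> etgt (f i) = esrc (f (Suc i))"
      by (auto simp: f_def esrc_def etgt_def Suc_diff_Suc)
    ultimately show "w \<in> Wminus (canEm L) esrc etgt elab"
      unfolding Wminus_def using x(3)
      by (intro CollectI exI[of _ f] exI[of _ n] exI[of _ "0::nat"]) (simp add: Suc_leI n_def)
  qed
qed

lemma lambda_graph_bisystem_canonical_pair:
  assumes "finite (UNIV :: 'a set)"
  shows "lambda_graph_bisystem UNIV UNIV (canV L) (canEm L) esrc etgt elab (canEp L) esrc etgt elab"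
  unfolding lambda_graph_bisystem_def
proof (intro conjI allI ballI impI local_property)
  fix l
  show "finite (canV L l)" "canV L l \<noteq> {}"
    using finite_Omega[OF assms] nonempty by (simp_all add: canV_def Omega_def)
next
  fix l v
  assume "1 \<le> l" "v \<in> canV L l"
  then show "\<exists>e\<in>canEm L l. etgt e = v" "\<exists>e\<in>canEm L (l - 1). esrc e = v"
    "\<exists>e\<in>canEp L l. esrc e = v" "\<exists>e\<in>canEp L (l - 1). etgt e = v"
    using ex_canEm_etgt ex_canEm_esrc[of v "l - 1"] ex_canEp_esrc ex_canEp_etgt[of v "l - 1"]
    by simp_all
next
  fix v
  assume "v \<in> canV L 0"
  then show "\<exists>e\<in>canEm L 0. etgt e = v" "\<exists>e\<in>canEp L 0. esrc e = v"
    by (simp_all add: ex_canEm_etgt ex_canEp_esrc)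
next
  fix l e e'
  assume "e \<in> canEm L l" "e' \<in> canEm L l" "esrc e = esrc e' \<and> elab e = elab e'"
  then show "e = e'"
    by (simp add: canEm_right_resolving)
next
  fix l e e'
  assume "e \<in> canEp L l" "e' \<in> canEp L l" "etgt e = etgt e' \<and> elab e = elab e'"
  then show "e = e'"
    by (simp add: canEp_left_resolving)
qed (simp_all add: assms esrc_canEm etgt_canEm esrc_canEp etgt_canEp)

lemma FPCC_canonical_pair:
  "FPCC UNIV UNIV (canV L) (canEm L) esrc etgt elab (canEp L) esrc etgt elab"
  unfolding FPCC_def using canV_0 Fwords_eq_vertex_words Pwords_eq_vertex_words by simp

end

section \<open>The presented subshift\<close>

lemma admissible_words_subset_imp_subset:
  fixes L1 L2 :: "(int \<Rightarrow> 'a) set"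
  assumes "subshift L2" "admissible_words L1 \<subseteq> admissible_words L2"
  shows "L1 \<subseteq> L2"
proof
  fix x assume "x \<in> L1"
  have "\<exists>y\<in>L2. \<forall>i. \<bar>i\<bar> \<le> int N \<longrightarrow> y i = x i" for N
  proof -
    define w where "w = map (\<lambda>i. x (int i - int N)) [0..<Suc (2 * N)]"
    have "w \<in> admissible_words L1"
      unfolding admissible_words_def using \<open>x \<in> L1\<close>
      by (auto simp: w_def intro!: exI[of _ x] exI[of _ "- int N"] simp del: upt_Suc)
    then obtain y n where y: "y \<in> L2" "\<forall>i<length w. y (n + int i) = w ! i"
      using assms(2) unfolding admissible_words_def by blast
    have "shift_pow (n + int N) y i = x i" if "\<bar>i\<bar> \<le> int N" for i
    proof -
      have "0 \<le> i + int N" "nat (i + int N) < length w"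
        using that by (auto simp: w_def)
      then show ?thesis
        using y(2)[rule_format, of "nat (i + int N)"]
        by (simp add: w_def shift_pow_apply algebra_simps del: upt_Suc)
    qed
    moreover have "shift_pow (n + int N) y \<in> L2"
      using canonical_pair.shift_pow_mem[OF canonical_pair.intro[OF assms(1)] y(1)] .
    ultimately show ?thesis by blast
  qed
  then show "x \<in> L2"
    using assms(1) by (simp add: subshift_def shift_closed_def)
qed

lemma presented_subshift_admissible_words:
  assumes "subshift L"
  shows "presented_subshift (admissible_words L) = L"
  unfolding presented_subshift_def
  using assms admissible_words_subset_imp_subset
  by (intro the_equality) (auto intro: subset_antisym)

theorem proposition5p4:
  fixes L :: "(int \<Rightarrow> 'a::finite) set"
  assumes "subshift L"
  shows "lambda_graph_bisystem (UNIV :: 'a set) (UNIV :: 'a set) (canV L)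
           (canEm L) esrc etgt elab (canEp L) esrc etgt elab
       \<and> FPCC (UNIV :: 'a set) (UNIV :: 'a set) (canV L)
           (canEm L) esrc etgt elab (canEp L) esrc etgt elab
       \<and> Wplus (canEp L) esrc etgt elab = Wminus (canEm L) esrc etgt elab
       \<and> presented_subshift (Wplus (canEp L) esrc etgt elab) = L"
proof -
  interpret canonical_pair L
    using assms by (rule canonical_pair.intro)
  show ?thesis
    using lambda_graph_bisystem_canonical_pair FPCC_canonical_pair
      Wplus_eq_admissible_words Wminus_eq_admissible_words
      presented_subshift_admissible_words[OF assms]
    by simp
qed

end
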